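(* Let $(S^\Omega,\mathcal T)$ be a resource theory with a currency $\mathcal C$ (value function $\mathrm{Val}$) independent of its target $\mathcal S$, and assume $\mathcal C$ is good for the poor. If $V\in\mathcal S$ satisfies $\mathrm{Balance}(V\to V\mid C)>0$ for some $C\in\mathcal C$, then $$\mathrm{Yield}(V)\ge\mathrm{Balance}(V\to V\mid C)>0=\mathrm{Cost}(V).$$
   Context: A resource theory $(S^\Omega,\mathcal T)$ consists of a set $\Omega$, the specification space $S^\Omega$ of all non-empty subsets of $\Omega$ (resources), and a set $\mathcal T$ of maps $f:S^\Omega\to S^\Omega$ acting element-wise, $f(V)=\bigcup_{\nu\in V} f(\{\nu\})$. $V\to W$ iff some $f\in\mathcal T$ has $f(V)\subseteq W$; $\to$ is assumed to be a pre-order. $\mathcal C\subseteq S^\Omega$ is a currency for target $\mathcal S\subseteq S^\Omega$ if (Order) any two elements of $\mathcal C$ are comparable under $\to$ and $\Omega\in\mathcal C$; (Universality) $\Omega\in\mathcal S$ and every $V\in\mathcal S$ has $C,C'\in\mathcal C$ with $C\to V$, $V\to C'$. A value function $\mathrm{Val}:\mathcal C\to\mathbb R_{\ge0}$ satisfies $\mathrm{Val}(C')\ge\mathrm{Val}(C)\iff C'\to C$ and $\mathrm{Val}(\Omega)=0$; $c_{\sup}=\sup_{C\in\mathcal C}\mathrm{Val}(C)$ (possibly $\infty$). $\mathrm{Cost}(V)=\inf\{\mathrm{Val}(C): C\in\mathcal C,\ C\to V\}$, $\mathrm{Yield}(V)=\sup\{\mathrm{Val}(C): C\in\mathcal C,\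 V\to C\}$. Independence: $C\cap V\ne\emptyset$ for all $C\in\mathcal C,V\in\mathcal S$, and $C\to C'$ implies $C\cap V\to C'\cap V$ for all $V\in\mathcal S$. Balance: $\mathrm{Balance}(V\to W\mid C)=\sup\{\mathrm{Val}(C')-\mathrm{Val}(C): C'\in\mathcal C,\ V\cap C\to W\cap C'\}$ (with $\sup\emptyset=-\infty$). Fairness conditions: for $V,W\in\mathcal S$ and $C_1,C_2\in\mathcal C$ with $V\cap C_1\to W\cap C_2$, let $\Delta=\mathrm{Val}(C_2)-\mathrm{Val}(C_1)$. (F1): for a given $C_1'\in\mathcal C$ with $-\Delta\le\mathrm{Val}(C_1')<c_{\sup}-\Delta$ there is $C_2'\in\mathcal C$ with $V\cap C_1'\to W\cap C_2'$ and $\mathrm{Val}(C_2')-\mathrm{Val}(C_1')=\Delta$. (F2): for a given $C_2'\in\mathcal C$ with $\Delta\le\mathrm{Val}(C_2')$ there is $C_1'\in\mathcal C$ with $V\cap C_1'\to W\cap C_2'$ and $\mathrm{Val}(C_2')-\mathrm{Val}(C_1')=\Delta$. The currency is good for the poor if, for all such data, (F1) holds for every admissible $C_1'$ with $\mathrm{Val}(C_1')\le\mathrm{Val}(C_1)$ and (F2) holds for every admissible $C_2'$ with $\mathrm{Val}(C_2')\le\mathrm{Val}(C_2)$. *)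

theory Defs
  imports "HOL-Analysis.Analysis"
begin

definition spec_space :: "'a set \<Rightarrow> 'a set set" where
  "spec_space \<Omega> = {V. V \<subseteq> \<Omega> \<and> V \<noteq> {}}"

definition conv :: "('a set \<Rightarrow> 'a set) set \<Rightarrow> 'a set \<Rightarrow> 'a set \<Rightarrow> bool" where
  "conv T V W \<longleftrightarrow> (\<exists>f\<in>T. f V \<subseteq> W)"

definition resource_theory :: "'a set \<Rightarrow> ('a set \<Rightarrow> 'a set) set \<Rightarrow> bool" where
  "resource_theory \<Omega> T \<longleftrightarrow>
     (\<forall>f\<in>T. (\<forall>V\<in>spec_space \<Omega>. f V \<in> spec_space \<Omega>) \<and>
             (\<forall>V\<in>spec_space \<Omega>. f V = (\<Union>\<nu>\<in>V. f {\<nu>}))) \<and>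
     (\<forall>V\<in>spec_space \<Omega>. conv T V V) \<and>
     (\<forall>U\<in>spec_space \<Omega>. \<forall>V\<in>spec_space \<Omega>. \<forall>W\<in>spec_space \<Omega>.
        conv T U V \<longrightarrow> conv T V W \<longrightarrow> conv T U W)"

definition currency ::
  "'a set \<Rightarrow> ('a set \<Rightarrow> 'a set) set \<Rightarrow> 'a set set \<Rightarrow> 'a set set \<Rightarrow> bool" where
  "currency \<Omega> T \<C> \<S> \<longleftrightarrow>
     \<C> \<subseteq> spec_space \<Omega> \<and> \<S> \<subseteq> spec_space \<Omega> \<and>
     (\<forall>C\<in>\<C>. \<forall>C'\<in>\<C>. conv T C C' \<or> conv T C' C) \<and> \<Omega> \<in> \<C> \<and>
     \<Omega> \<in> \<S> \<and>
     (\<forall>V\<in>\<S>. (\<exists>C\<in>\<C>. conv T C V) \<and> (\<exists>C'\<in>\<C>. conv T V C'))"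

definition value_function ::
  "'a set \<Rightarrow> ('a set \<Rightarrow> 'a set) set \<Rightarrow> 'a set set \<Rightarrow> ('a set \<Rightarrow> real) \<Rightarrow> bool" where
  "value_function \<Omega> T \<C> Val \<longleftrightarrow>
     (\<forall>C\<in>\<C>. Val C \<ge> 0) \<and>
     (\<forall>C\<in>\<C>. \<forall>C'\<in>\<C>. Val C' \<ge> Val C \<longleftrightarrow> conv T C' C) \<and>
     Val \<Omega> = 0"

definition c_sup :: "'a set set \<Rightarrow> ('a set \<Rightarrow> real) \<Rightarrow> ereal" where
  "c_sup \<C> Val = (SUP C\<in>\<C>. ereal (Val C))"

definition Cost ::
  "('a set \<Rightarrow> 'a set) set \<Rightarrow> 'a set set \<Rightarrow> ('a set \<Rightarrow> real) \<Rightarrow> 'a set \<Rightarrow> ereal" where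
  "Cost T \<C> Val V = (INF C\<in>{C\<in>\<C>. conv T C V}. ereal (Val C))"

definition Yield ::
  "('a set \<Rightarrow> 'a set) set \<Rightarrow> 'a set set \<Rightarrow> ('a set \<Rightarrow> real) \<Rightarrow> 'a set \<Rightarrow> ereal" where
  "Yield T \<C> Val V = (SUP C\<in>{C\<in>\<C>. conv T V C}. ereal (Val C))"

definition independent ::
  "('a set \<Rightarrow> 'a set) set \<Rightarrow> 'a set set \<Rightarrow> 'a set set \<Rightarrow> bool" where
  "independent T \<C> \<S> \<longleftrightarrow>
     (\<forall>C\<in>\<C>. \<forall>V\<in>\<S>. C \<inter> V \<noteq> {}) \<and>
     (\<forall>C\<in>\<C>. \<forall>C'\<in>\<C>. conv T C C' \<longrightarrow> (\<forall>V\<in>\<S>. conv T (C \<inter> V) (C' \<inter> V)))"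

text \<open>Balance; the supremum of the empty set is -infinity (ereal bot).\<close>
definition Balance ::
  "('a set \<Rightarrow> 'a set) set \<Rightarrow> 'a set set \<Rightarrow> ('a set \<Rightarrow> real) \<Rightarrow> 'a set \<Rightarrow> 'a set \<Rightarrow> 'a set \<Rightarrow> ereal" where
  "Balance T \<C> Val V W C =
     (SUP C'\<in>{C'\<in>\<C>. conv T (V \<inter> C) (W \<inter> C')}. ereal (Val C' - Val C))"

definition good_for_the_poor ::
  "('a set \<Rightarrow> 'a set) set \<Rightarrow> 'a set set \<Rightarrow> 'a set set \<Rightarrow> ('a set \<Rightarrow> real) \<Rightarrow> bool" where
  "good_for_the_poor T \<C> \<S> Val \<longleftrightarrow>
     (\<forall>V\<in>\<S>. \<forall>W\<in>\<S>. \<forall>C1\<in>\<C>. \<forall>C2\<in>\<C>. conv T (V \<inter> C1) (W \<inter> C2) \<longrightarrow>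
        (let \<Delta> = Val C2 - Val C1 in
          (\<forall>C1'\<in>\<C>. - \<Delta> \<le> Val C1' \<and> ereal (Val C1') < c_sup \<C> Val - ereal \<Delta> \<and>
                     Val C1' \<le> Val C1 \<longrightarrow>
             (\<exists>C2'\<in>\<C>. conv T (V \<inter> C1') (W \<inter> C2') \<and> Val C2' - Val C1' = \<Delta>)) \<and>
          (\<forall>C2'\<in>\<C>. \<Delta> \<le> Val C2' \<and> Val C2' \<le> Val C2 \<longrightarrow>
             (\<exists>C1'\<in>\<C>. conv T (V \<inter> C1') (W \<inter> C2') \<and> Val C2' - Val C1' = \<Delta>))))"

end

theory Submission
  imports Defs
begin

text \<open>Good-for-the-poor, applied with the empty currency \<open>\<Omega>\<close> (of value 0) as the new
  capital, shows that a gain \<open>V \<inter> C\<^sub>1 \<rightarrow> W \<inter> C\<^sub>2\<close> can be made without capital,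
  \<open>V \<rightarrow> W \<inter> C\<close> with \<open>Val C = Val C\<^sub>2 - Val C\<^sub>1\<close>, and that a loss can be absorbed without
  capital, \<open>V \<inter> C \<rightarrow> W\<close> with \<open>Val C = Val C\<^sub>1 - Val C\<^sub>2\<close>. (For \<open>Val C\<^sub>1 = 0\<close> condition (F1)
  may fail when \<open>Val C\<^sub>2 = c_sup\<close>; there independence gives \<open>V \<rightarrow> V \<inter> C\<^sub>1\<close> directly.)
  A positive balance \<open>V \<inter> C \<rightarrow> V \<inter> C'\<close> therefore yields \<open>V \<rightarrow> V \<inter> D\<close> with
  \<open>Val D = Val C' - Val C > 0\<close>, which bounds the yield from below.
  For the cost, take any \<open>C\<^sub>1 \<rightarrow> V\<close>: then \<open>C\<^sub>1 \<rightarrow> V \<inter> D\<close>, and as long as \<open>Val C\<^sub>1 > Val D\<close>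
  the loss can be absorbed, giving a cheaper \<open>C\<^sub>1' \<rightarrow> V\<close> with
  \<open>Val C\<^sub>1' = Val C\<^sub>1 - Val D\<close>. After finitely many steps \<open>Val C\<^sub>1 \<le> Val D\<close>, and the
  gain \<open>C\<^sub>1 \<rightarrow> V \<inter> D\<close> made without capital shows \<open>\<Omega> \<rightarrow> V\<close>, so the cost is 0.\<close>

lemma resource_theory_conv_subset:
  assumes "resource_theory \<Omega> T" "A \<in> spec_space \<Omega>" "B \<in> spec_space \<Omega>" "A \<subseteq> B"
  shows "conv T A B"
proof -
  have refl: "\<forall>V\<in>spec_space \<Omega>. conv T V V"
    and elementwise: "\<forall>f\<in>T. \<forall>V\<in>spec_space \<Omega>. f V = (\<Union>\<nu>\<in>V. f {\<nu>})"
    using assms(1) unfolding resource_theory_def by blast+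
  obtain f where f: "f \<in> T" "f B \<subseteq> B"
    using refl assms(3) unfolding conv_def by blast
  have "f A = (\<Union>\<nu>\<in>A. f {\<nu>})" "f B = (\<Union>\<nu>\<in>B. f {\<nu>})"
    using elementwise assms(2,3) f(1) by blast+
  with assms(4) f show ?thesis
    unfolding conv_def by blast
qed

locale currency_good_for_the_poor =
  fixes \<Omega> :: "'a set" and T :: "('a set \<Rightarrow> 'a set) set"
    and \<C> \<S> :: "'a set set" and Val :: "'a set \<Rightarrow> real"
  assumes resource_theory: "resource_theory \<Omega> T"
    and currency: "currency \<Omega> T \<C> \<S>"
    and value_function: "value_function \<Omega> T \<C> Val"
    and independent: "independent T \<C> \<S>"
    and good_for_the_poor: "good_for_the_poor T \<C> \<S> Val"
begin

lemma currency_spec_space: "C \<in> \<C> \<Longrightarrow> C \<in> spec_space \<Omega>"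
  and target_spec_space: "V \<in> \<S> \<Longrightarrow> V \<in> spec_space \<Omega>"
  and Omega_currency: "\<Omega> \<in> \<C>"
  and Omega_target: "\<Omega> \<in> \<S>"
  and target_has_cost: "V \<in> \<S> \<Longrightarrow> \<exists>C\<in>\<C>. conv T C V"
  using currency unfolding currency_def by blast+

lemma Val_Omega [simp]: "Val \<Omega> = 0"
  and Val_nonneg: "C \<in> \<C> \<Longrightarrow> 0 \<le> Val C"
  using value_function unfolding value_function_def by blast+

lemma Omega_spec_space: "\<Omega> \<in> spec_space \<Omega>"
  using currency_spec_space Omega_currency .

lemma Int_Omega_target [simp]: "V \<in> \<S> \<Longrightarrow> V \<inter> \<Omega> = V" "V \<in> \<S> \<Longrightarrow> \<Omega> \<inter> V = V"
  and Int_Omega_currency [simp]: "C \<in> \<C> \<Longrightarrow> \<Omega> \<inter> C = C"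
  using target_spec_space currency_spec_space unfolding spec_space_def by blast+

lemma target_Int_currency_spec_space: "V \<in> \<S> \<Longrightarrow> C \<in> \<C> \<Longrightarrow> V \<inter> C \<in> spec_space \<Omega>"
  using independent target_spec_space[of V] unfolding independent_def spec_space_def by blast

lemma conv_trans:
  "conv T A B \<Longrightarrow> conv T B D \<Longrightarrow> A \<in> spec_space \<Omega> \<Longrightarrow> B \<in> spec_space \<Omega> \<Longrightarrow>
    D \<in> spec_space \<Omega> \<Longrightarrow> conv T A D"
  using resource_theory unfolding resource_theory_def by blast

lemma conv_subset: "A \<in> spec_space \<Omega> \<Longrightarrow> B \<in> spec_space \<Omega> \<Longrightarrow> A \<subseteq> B \<Longrightarrow> conv T A B"
  using resource_theory_conv_subset[OF resource_theory] .

lemma Omega_conv_Val_zero: "C \<in> \<C> \<Longrightarrow> Val C = 0 \<Longrightarrow> conv T \<Omega> C"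
  using value_function Omega_currency unfolding value_function_def by force

lemma independent_conv_Int:
  "C \<in> \<C> \<Longrightarrow> C' \<in> \<C> \<Longrightarrow> conv T C C' \<Longrightarrow> V \<in> \<S> \<Longrightarrow> conv T (C \<inter> V) (C' \<inter> V)"
  using independent unfolding independent_def by blast

lemma good_for_the_poor_F1:
  assumes "V \<in> \<S>" "W \<in> \<S>" "C1 \<in> \<C>" "C2 \<in> \<C>" "conv T (V \<inter> C1) (W \<inter> C2)" "C1' \<in> \<C>"
    "- (Val C2 - Val C1) \<le> Val C1'" "ereal (Val C1') < c_sup \<C> Val - ereal (Val C2 - Val C1)"
    "Val C1' \<le> Val C1"
  shows "\<exists>C2'\<in>\<C>. conv T (V \<inter> C1') (W \<inter> C2') \<and> Val C2' - Val C1' = Val C2 - Val C1"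
  using good_for_the_poor[unfolded good_for_the_poor_def Let_def, rule_format, OF assms(1-5),
      THEN conjunct1, rule_format, OF assms(6)] assms(7-9) by blast

lemma good_for_the_poor_F2:
  assumes "V \<in> \<S>" "W \<in> \<S>" "C1 \<in> \<C>" "C2 \<in> \<C>" "conv T (V \<inter> C1) (W \<inter> C2)" "C2' \<in> \<C>"
    "Val C2 - Val C1 \<le> Val C2'" "Val C2' \<le> Val C2"
  shows "\<exists>C1'\<in>\<C>. conv T (V \<inter> C1') (W \<inter> C2') \<and> Val C2' - Val C1' = Val C2 - Val C1"
  using good_for_the_poor[unfolded good_for_the_poor_def Let_def, rule_format, OF assms(1-5),
      THEN conjunct2, rule_format, OF assms(6)] assms(7-8) by blast

lemma gain_without_capital:
  assumes V: "V \<in> \<S>" and W: "W \<in> \<S>" and C1: "C1 \<in> \<C>" and C2: "C2 \<in> \<C>"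
    and conv: "conv T (V \<inter> C1) (W \<inter> C2)" and gain: "Val C1 \<le> Val C2"
  shows "\<exists>C\<in>\<C>. conv T V (W \<inter> C) \<and> Val C = Val C2 - Val C1"
proof (cases "Val C1 = 0")
  case True
  have "conv T (\<Omega> \<inter> V) (C1 \<inter> V)"
    using independent_conv_Int[OF Omega_currency C1 Omega_conv_Val_zero[OF C1 True] V] .
  then have "conv T V (V \<inter> C1)"
    using V by (simp add: Int_commute)
  with conv have "conv T V (W \<inter> C2)"
    using conv_trans target_spec_space target_Int_currency_spec_space V W C1 C2 by blast
  with C2 True show ?thesis
    by auto
next
  case False
  with Val_nonneg[OF C1] have "0 < Val C1"
    by simp
  moreover have "ereal (Val C2) \<le> c_sup \<C> Val"
    unfolding c_sup_def using C2 by (rule SUP_upper)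
  ultimately have "ereal 0 < c_sup \<C> Val - ereal (Val C2 - Val C1)"
    by (cases "c_sup \<C> Val") auto
  with good_for_the_poor_F1[OF V W C1 C2 conv Omega_currency] gain False Val_nonneg[OF C1] V show ?thesis
    by auto
qed

lemma loss_without_capital:
  assumes V: "V \<in> \<S>" and W: "W \<in> \<S>" and C1: "C1 \<in> \<C>" and C2: "C2 \<in> \<C>"
    and conv: "conv T (V \<inter> C1) (W \<inter> C2)" and loss: "Val C2 \<le> Val C1"
  shows "\<exists>C\<in>\<C>. conv T (V \<inter> C) W \<and> Val C = Val C1 - Val C2"
  using good_for_the_poor_F2[OF V W C1 C2 conv Omega_currency] loss Val_nonneg[OF C2] W
  by auto

lemma Omega_conv_if_cost_bounded:
  assumes V: "V \<in> \<S>" and D: "D \<in> \<C>" and VD: "conv T V (V \<inter> D)"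
  shows "C1 \<in> \<C> \<Longrightarrow> conv T C1 V \<Longrightarrow> Val C1 \<le> real n * Val D \<Longrightarrow> conv T \<Omega> V"
proof (induction n arbitrary: C1)
  case 0
  then have "conv T \<Omega> C1"
    using Omega_conv_Val_zero Val_nonneg[of C1] by simp
  with "0.prems"(1,2) show ?case
    using conv_trans[OF _ _ Omega_spec_space currency_spec_space target_spec_space[OF V]] by blast
next
  case n: (Suc n)
  have V_sp: "V \<in> spec_space \<Omega>" and VD_sp: "V \<inter> D \<in> spec_space \<Omega>"
    using target_spec_space target_Int_currency_spec_space V D by auto
  have "conv T C1 (V \<inter> D)"
    using conv_trans[OF n.prems(2) VD currency_spec_space[OF n.prems(1)] V_sp VD_sp] .
  then have C1_D: "conv T (\<Omega> \<inter> C1) (V \<inter> D)"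
    using n.prems(1) by simp
  show ?case
  proof (cases "Val C1 \<le> Val D")
    case True
    then obtain C where C: "C \<in> \<C>" and Omega_C: "conv T \<Omega> (V \<inter> C)"
      using gain_without_capital[OF Omega_target V n.prems(1) D C1_D] by auto
    have VC_sp: "V \<inter> C \<in> spec_space \<Omega>"
      using target_Int_currency_spec_space[OF V C] .
    have "conv T (V \<inter> C) V"
      using conv_subset[OF VC_sp V_sp] by blast
    with Omega_C show ?thesis
      using conv_trans[OF _ _ Omega_spec_space VC_sp V_sp] by blast
  next
    case False
    then obtain C where "C \<in> \<C>" "conv T C V" "Val C = Val C1 - Val D"
      using loss_without_capital[OF Omega_target V n.prems(1) D C1_D] by auto
    with n.prems(3) show ?thesis
      by (intro n.IH) (auto simp: algebra_simps)
  qed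
qed

lemma Omega_conv_if_self_gain:
  assumes V: "V \<in> \<S>" and D: "D \<in> \<C>" "0 < Val D" and VD: "conv T V (V \<inter> D)"
  shows "conv T \<Omega> V"
proof -
  obtain C1 where C1: "C1 \<in> \<C>" "conv T C1 V"
    using target_has_cost[OF V] by blast
  obtain n where "Val C1 < real n * Val D"
    using reals_Archimedean3[OF D(2)] by blast
  then show ?thesis
    by (intro Omega_conv_if_cost_bounded[OF V D(1) VD C1, of n]) simp
qed

lemma Cost_eq_0_if_Omega_conv: "conv T \<Omega> V \<Longrightarrow> Cost T \<C> Val V = 0"
  unfolding Cost_def zero_ereal_def[symmetric]
  by (rule antisym, rule INF_lower2[of \<Omega>]) (auto simp: Omega_currency Val_nonneg intro!: INF_greatest)

lemma Yield_ge: "C \<in> \<C> \<Longrightarrow> conv T V C \<Longrightarrow> ereal (Val C) \<le> Yield T \<C> Val V"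
  unfolding Yield_def by (auto intro!: SUP_upper)

lemma Balance_self_le_Yield:
  assumes V: "V \<in> \<S>" and C: "C \<in> \<C>"
  shows "Balance T \<C> Val V V C \<le> Yield T \<C> Val V"
  unfolding Balance_def
proof (rule SUP_least)
  fix C' assume C': "C' \<in> {C' \<in> \<C>. conv T (V \<inter> C) (V \<inter> C')}"
  have V_sp: "V \<in> spec_space \<Omega>"
    using target_spec_space[OF V] .
  show "ereal (Val C' - Val C) \<le> Yield T \<C> Val V"
  proof (cases "Val C \<le> Val C'")
    case True
    then obtain D where D: "D \<in> \<C>" "conv T V (V \<inter> D)" "Val D = Val C' - Val C"
      using gain_without_capital[OF V V C] C' by blast
    have VD_sp: "V \<inter> D \<in> spec_space \<Omega>"
      using target_Int_currency_spec_space[OF V D(1)] .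
    have "conv T (V \<inter> D) D"
      using conv_subset[OF VD_sp currency_spec_space[OF D(1)]] by blast
    then have "conv T V D"
      using conv_trans[OF D(2) _ V_sp VD_sp currency_spec_space[OF D(1)]] by blast
    with Yield_ge[OF D(1)] D(3) show ?thesis
      by simp
  next
    case False
    have "conv T V \<Omega>"
      using conv_subset[OF V_sp Omega_spec_space] V_sp unfolding spec_space_def by blast
    then have "0 \<le> Yield T \<C> Val V"
      using Yield_ge[OF Omega_currency] by (simp add: zero_ereal_def)
    with False show ?thesis
      by (simp add: order_trans[rotated])
  qed
qed

end

theorem mainTheorem19:
  fixes \<Omega> :: "'a set" and T :: "('a set \<Rightarrow> 'a set) set"
    and \<C> \<S> :: "'a set set" and Val :: "'a set \<Rightarrow> real"
    and V C :: "'a set"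
  assumes "resource_theory \<Omega> T"
    and "currency \<Omega> T \<C> \<S>"
    and "value_function \<Omega> T \<C> Val"
    and "independent T \<C> \<S>"
    and "good_for_the_poor T \<C> \<S> Val"
    and "V \<in> \<S>" and "C \<in> \<C>"
    and "Balance T \<C> Val V V C > 0"
  shows "Yield T \<C> Val V \<ge> Balance T \<C> Val V V C \<and> Balance T \<C> Val V V C > 0
         \<and> Cost T \<C> Val V = 0"
proof -
  interpret currency_good_for_the_poor \<Omega> T \<C> \<S> Val
    using assms(1-5) by unfold_locales
  obtain C' where C': "C' \<in> \<C>" "conv T (V \<inter> C) (V \<inter> C')" "Val C < Val C'"
    using assms(8) unfolding Balance_def by (auto simp: less_SUP_iff)
  then obtain D where D: "D \<in> \<C>" "conv T V (V \<inter> D)" "0 < Val D"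
    using gain_without_capital[OF assms(6,6,7)] by force
  have "Cost T \<C> Val V = 0"
    using Cost_eq_0_if_Omega_conv Omega_conv_if_self_gain[OF assms(6) D(1,3,2)] by blast
  with Balance_self_le_Yield[OF assms(6,7)] assms(8) show ?thesis
    by blast
qed

end
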